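(* If $S$ is an idempotent semiring satisfying $x\approx xyx+x+xyx$ (equivalently, $\mathcal{D}^{\bullet}$ is the least distributive lattice congruence on $S$), then the multiplicative reduct $(S,\cdot)$ is a normal band, i.e. $xyzx=xzyx$ for all $x,y,z\in S$.
   Context: An idempotent semiring is an algebra $(S,+,\cdot)$ with $(S,+)$, $(S,\cdot)$ bands and both distributive laws; addition not assumed commutative. $a\,\mathcal{D}^{\bullet}\,b$ iff $aba=a$ and $bab=b$. A distributive lattice congruence is a congruence $\rho$ with $S/\rho$ satisfying $x+y\approx y+x$, $xy\approx yx$, $x+xy\approx x$. *)

theory Defs
  imports Main
begin

definition band :: "('a \<Rightarrow> 'a \<Rightarrow> 'a) \<Rightarrow> bool" where
  "band f \<longleftrightarrow> (\<forall>x y z. f (f x y) z = f x (f y z)) \<and> (\<forall>x. f x x = x)"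

text \<open>Idempotent semiring: both reducts are bands, both distributive laws;
addition is not assumed commutative.\<close>
definition idempotent_semiring :: "('a \<Rightarrow> 'a \<Rightarrow> 'a) \<Rightarrow> ('a \<Rightarrow> 'a \<Rightarrow> 'a) \<Rightarrow> bool" where
  "idempotent_semiring add mul \<longleftrightarrow> band add \<and> band mul \<and>
     (\<forall>x y z. mul x (add y z) = add (mul x y) (mul x z)) \<and>
     (\<forall>x y z. mul (add x y) z = add (mul x z) (mul y z))"

end

theory Submission
  imports Defs
begin

text \<open>
  For \<open>a = xyx\<close> the identity \<open>x = a + x + a\<close> forces \<open>x + a = a + x = x\<close>; hence for
  \<open>a = xyx\<close>, \<open>b = xzx\<close> the sum \<open>a + b\<close> acts as a two-sided identity on \<open>a\<close> and \<open>b\<close>.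
  Since \<open>(a + b) ab (a + b)\<close> and \<open>(a + b) ba (a + b)\<close> both expand to \<open>aba + ab + ba + bab\<close>,
  this gives \<open>ab = ba\<close>: every local submonoid \<open>xSx\<close> of the multiplicative band is a
  semilattice, and a band with this property is normal.
\<close>

locale mult_band =
  fixes mul :: "'a \<Rightarrow> 'a \<Rightarrow> 'a"  (infixl "\<cdot>" 70)
  assumes band_mul: "band mul"
begin

lemma mul_assoc: "x \<cdot> y \<cdot> z = x \<cdot> (y \<cdot> z)"
  using band_mul unfolding band_def by blast

lemma mul_idem [simp]: "x \<cdot> x = x"
  using band_mul unfolding band_def by blast

lemma mul_idem_left [simp]: "x \<cdot> (x \<cdot> y) = x \<cdot> y"
  by (metis mul_assoc mul_idem)

lemma mul_pair_idem [simp]: "x \<cdot> (y \<cdot> (x \<cdot> y)) = x \<cdot> y"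
  by (metis mul_assoc mul_idem)

lemma mul_pair_idem_left [simp]: "x \<cdot> (y \<cdot> (x \<cdot> (y \<cdot> z))) = x \<cdot> (y \<cdot> z)"
  by (metis mul_assoc mul_idem)

lemma normal_if_local_comm:
  assumes local_comm: "\<And>x y z. x \<cdot> y \<cdot> x \<cdot> (x \<cdot> z \<cdot> x) = x \<cdot> z \<cdot> x \<cdot> (x \<cdot> y \<cdot> x)"
  shows "x \<cdot> y \<cdot> z \<cdot> x = x \<cdot> z \<cdot> y \<cdot> x"
proof -
  have reorder: "x \<cdot> y \<cdot> x \<cdot> z \<cdot> x \<cdot> y = x \<cdot> z \<cdot> x \<cdot> y" for x y z
  proof -
    have "x \<cdot> y \<cdot> x \<cdot> (x \<cdot> z \<cdot> x) \<cdot> y = x \<cdot> z \<cdot> x \<cdot> (x \<cdot> y \<cdot> x) \<cdot> y"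
      by (simp only: local_comm)
    then show ?thesis
      by (simp add: mul_assoc)
  qed
  have drop: "x \<cdot> y \<cdot> z \<cdot> x \<cdot> y = x \<cdot> z \<cdot> x \<cdot> y" for x y z
    by (metis reorder mul_assoc mul_idem)
  have factor: "x \<cdot> y \<cdot> z \<cdot> x = x \<cdot> z \<cdot> x \<cdot> (x \<cdot> y \<cdot> x)" for x y z
  proof -
    have "x \<cdot> y \<cdot> z \<cdot> x = x \<cdot> y \<cdot> x \<cdot> (x \<cdot> (y \<cdot> z) \<cdot> x)"
      by (simp add: mul_assoc)
    also have "\<dots> = x \<cdot> (y \<cdot> z) \<cdot> x \<cdot> (x \<cdot> y \<cdot> x)"
      by (rule local_comm)
    also have "\<dots> = x \<cdot> y \<cdot> z \<cdot> x \<cdot> y \<cdot> x"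
      by (simp add: mul_assoc)
    also have "\<dots> = x \<cdot> z \<cdot> x \<cdot> (x \<cdot> y \<cdot> x)"
      by (simp only: drop) (simp add: mul_assoc)
    finally show ?thesis .
  qed
  show ?thesis
    by (simp only: factor[of x y z] factor[of x z y] local_comm[of x y z])
qed

end

locale idem_semiring = mult_band mul
  for mul :: "'a \<Rightarrow> 'a \<Rightarrow> 'a"  (infixl "\<cdot>" 70) +
  fixes add :: "'a \<Rightarrow> 'a \<Rightarrow> 'a"  (infixl "\<oplus>" 65)
  assumes idempotent_semiring: "idempotent_semiring add mul"
begin

lemma add_assoc: "x \<oplus> y \<oplus> z = x \<oplus> (y \<oplus> z)"
  using idempotent_semiring unfolding idempotent_semiring_def band_def by blast

lemma add_idem [simp]: "x \<oplus> x = x"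
  using idempotent_semiring unfolding idempotent_semiring_def band_def by blast

lemma distrib_left: "x \<cdot> (y \<oplus> z) = x \<cdot> y \<oplus> x \<cdot> z"
  using idempotent_semiring unfolding idempotent_semiring_def by blast

lemma distrib_right: "(x \<oplus> y) \<cdot> z = x \<cdot> z \<oplus> y \<cdot> z"
  using idempotent_semiring unfolding idempotent_semiring_def by blast

lemma sandwich_mul_commute: "(a \<oplus> b) \<cdot> (a \<cdot> b) \<cdot> (a \<oplus> b) = (a \<oplus> b) \<cdot> (b \<cdot> a) \<cdot> (a \<oplus> b)"
  by (simp add: distrib_left distrib_right mul_assoc add_assoc)

lemma mul_commute_if_sum_unit:
  assumes "(a \<oplus> b) \<cdot> a = a" "a \<cdot> (a \<oplus> b) = a" "(a \<oplus> b) \<cdot> b = b" "b \<cdot> (a \<oplus> b) = b"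
  shows "a \<cdot> b = b \<cdot> a"
proof -
  have "a \<cdot> b = (a \<oplus> b) \<cdot> a \<cdot> (b \<cdot> (a \<oplus> b))"
    by (simp only: assms)
  also have "\<dots> = (a \<oplus> b) \<cdot> (b \<cdot> a) \<cdot> (a \<oplus> b)"
    using sandwich_mul_commute[of a b] by (simp only: mul_assoc)
  also have "\<dots> = (a \<oplus> b) \<cdot> b \<cdot> (a \<cdot> (a \<oplus> b))"
    by (simp only: mul_assoc)
  also have "\<dots> = b \<cdot> a"
    by (simp only: assms)
  finally show ?thesis .
qed

lemma mul_commute_if_absorbed:
  assumes "x \<cdot> a = a" "a \<cdot> x = a" "x \<cdot> b = b" "b \<cdot> x = b" "x \<oplus> b = x" "a \<oplus> x = x"
  shows "a \<cdot> b = b \<cdot> a"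
proof (rule mul_commute_if_sum_unit)
  show "(a \<oplus> b) \<cdot> a = a"
    by (metis assms(1,5) distrib_right mul_idem)
  show "a \<cdot> (a \<oplus> b) = a"
    by (metis assms(2,5) distrib_left mul_idem)
  show "(a \<oplus> b) \<cdot> b = b"
    by (metis assms(3,6) distrib_right mul_idem)
  show "b \<cdot> (a \<oplus> b) = b"
    by (metis assms(4,6) distrib_left mul_idem)
qed

lemma local_comm_if_sandwich_identity:
  assumes sandwich: "\<And>x y. x = x \<cdot> y \<cdot> x \<oplus> x \<oplus> x \<cdot> y \<cdot> x"
  shows "x \<cdot> y \<cdot> x \<cdot> (x \<cdot> z \<cdot> x) = x \<cdot> z \<cdot> x \<cdot> (x \<cdot> y \<cdot> x)"
proof (rule mul_commute_if_absorbed)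
  have absorb: "x \<oplus> x \<cdot> u \<cdot> x = x" "x \<cdot> u \<cdot> x \<oplus> x = x" for u
    using sandwich[of x u] by (metis add_assoc add_idem)+
  show "x \<oplus> x \<cdot> z \<cdot> x = x" "x \<cdot> y \<cdot> x \<oplus> x = x"
    by (fact absorb)+
  show "x \<cdot> (x \<cdot> y \<cdot> x) = x \<cdot> y \<cdot> x" "x \<cdot> y \<cdot> x \<cdot> x = x \<cdot> y \<cdot> x"
    "x \<cdot> (x \<cdot> z \<cdot> x) = x \<cdot> z \<cdot> x" "x \<cdot> z \<cdot> x \<cdot> x = x \<cdot> z \<cdot> x"
    by (simp_all add: mul_assoc)
qed

end

theorem theorem4p7:
  fixes add :: "'a \<Rightarrow> 'a \<Rightarrow> 'a" and mul :: "'a \<Rightarrow> 'a \<Rightarrow> 'a"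
  assumes "idempotent_semiring add mul"
    and "\<forall>x y. x = add (add (mul (mul x y) x) x) (mul (mul x y) x)"
  shows "\<forall>x y z. mul (mul (mul x y) z) x = mul (mul (mul x z) y) x"
proof -
  interpret idem_semiring mul add
    using assms(1) by unfold_locales (auto simp: idempotent_semiring_def)
  show ?thesis
    using normal_if_local_comm local_comm_if_sandwich_identity assms(2) by blast
qed

end
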